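(* Let $\mathbb{K}$ be a field of characteristic zero and $(n_1,\dots,n_t)$ a tuple of integers. If $(n_1,\dots,n_t)$ forms an $\mathfrak{sl}_2$-chained Lie algebra, then for every $1\le k\le t$ the truncated tuple $(n_1,\dots,n_k)$ also forms an $\mathfrak{sl}_2$-chained Lie algebra.
   Context: For $d\ge0$, $V_d\subset\mathbb{K}[x,y]$ is the space of homogeneous polynomials of degree $d$, an $\mathfrak{sl}_2(\mathbb{K})$-module with $\mathfrak{sl}_2(\mathbb{K})$ identified with the span of $x\frac{\partial}{\partial y}$, $y\frac{\partial}{\partial x}$, $x\frac{\partial}{\partial x}-y\frac{\partial}{\partial y}$. For $f\in V_n$, $g\in V_m$, $0\le k\le\min(n,m)$, the transvection is $(f,g)_k=\frac{(m-k)!}{m!}\frac{(n-k)!}{n!}\sum_{i=0}^{k}(-1)^i\binom{k}{i}\frac{\partial^kf}{\partial x^{k-i}\partial y^{i}}\frac{\partial^kg}{\partial x^{i}\partial y^{k-i}}\in V_{n+m-2k}$. Given $(n_1,\dots,n_t)$ put $m_i=V_{d_i}$ with $d_i=in_1-2(n_2+\cdots+n_i)$ and $c_{ijk}=\frac{d_i+d_j-d_k}{2}$. The tuple forms an $\mathfrak{sl}_2$-chained Lie algebra if all $d_i\ge0$ and there are scalars $\alpha_{ijk}\in\mathbb{K}$ ($1\le i\le j$, $i+j\le k\le t$), with $\alpha_{1,j,j+1}\ne0$ for $j=1,\dots,t-1$ and $\alpha_{ijk}=0$ whenever $(\cdot,\cdot)_{c_{ijk}}$ is undefined or (for $i=j$)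 not skew-symmetric, such that the bracket on $\mathfrak{g}=\mathfrak{sl}_2(\mathbb{K})\oplus m_1\oplus\cdots\oplus m_t$ given by the commutator on $\mathfrak{sl}_2(\mathbb{K})$, $[s,u]=-[u,s]=s(u)$ for $s\in\mathfrak{sl}_2(\mathbb{K})$, and $[u,v]=-[v,u]=\sum_{k=i+j}^t\alpha_{ijk}(u,v)_{c_{ijk}}$ for $u\in m_i$, $v\in m_j$, $i\le j$, makes $\mathfrak{g}$ a Lie algebra whose lattice of ideals is the chain $0<m_t<m_{t-1}\oplus m_t<\cdots<m_1\oplus\cdots\oplus m_t<\mathfrak{g}$. *)

theory Defs
  imports "HOL-Computational_Algebra.Polynomial"
begin

text \<open>Bivariate polynomials over the field K are encoded as 'a poly poly:
  the outer variable is y, the inner variable is x.  The coefficient of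
  x^i y^j in f is coeff (coeff f j) i.\<close>

definition pX :: "'a::idom poly poly" where "pX = [:[:0, 1:]:]"
definition pY :: "'a::idom poly poly" where "pY = [:0, 1:]"
definition pC :: "'a::idom \<Rightarrow> 'a poly poly" where "pC a = [:[:a:]:]"

definition Dx :: "'a::idom poly poly \<Rightarrow> 'a poly poly" where "Dx f = map_poly pderiv f"
definition Dy :: "'a::idom poly poly \<Rightarrow> 'a poly poly" where "Dy f = pderiv f"

definition homog :: "nat \<Rightarrow> 'a::zero poly poly \<Rightarrow> bool" where
  "homog d f \<longleftrightarrow> (\<forall>i j. coeff (coeff f j) i \<noteq> 0 \<longrightarrow> i + j = d)"

definition Vd :: "nat \<Rightarrow> 'a::zero poly poly set" where "Vd d = {f. homog d f}"

definition transv :: "nat \<Rightarrow> nat \<Rightarrow> nat \<Rightarrow> 'a::field_char_0 poly poly \<Rightarrow> 'a poly poly \<Rightarrow> 'a poly poly" where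
  "transv n m k f g =
     pC ((fact (m - k) / fact m) * (fact (n - k) / fact n)) *
     (\<Sum>i = 0..k. pC ((-1) ^ i * of_nat (k choose i)) *
        ((Dx ^^ (k - i)) ((Dy ^^ i) f) * (Dx ^^ i) ((Dy ^^ (k - i)) g)))"

text \<open>sl_2(K): the triple (a,b,c) stands for a*(x d/dy) + b*(y d/dx) + c*(x d/dx - y d/dy).\<close>
definition sl2_act :: "'a::idom \<times> 'a \<times> 'a \<Rightarrow> 'a poly poly \<Rightarrow> 'a poly poly" where
  "sl2_act s f = (case s of (a, b, c) \<Rightarrow>
     pC a * pX * Dy f + pC b * pY * Dx f + pC c * (pX * Dx f - pY * Dy f))"

text \<open>The commutator of vector fields, written out in the basis
  E = x d/dy, F = y d/dx, H = x d/dx - y d/dy: [E,F]=H, [H,E]=2E, [H,F]=-2F.\<close>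
definition sl2_br :: "'a::idom \<times> 'a \<times> 'a \<Rightarrow> 'a \<times> 'a \<times> 'a \<Rightarrow> 'a \<times> 'a \<times> 'a" where
  "sl2_br s1 s2 = (case s1 of (a1, b1, c1) \<Rightarrow> case s2 of (a2, b2, c2) \<Rightarrow>
     (2 * (c1 * a2 - a1 * c2), 2 * (b1 * c2 - c1 * b2), a1 * b2 - a2 * b1))"

text \<open>Data attached to a tuple ns = (n_1,...,n_t), with n_i = ns ! (i - 1).\<close>
definition dd :: "int list \<Rightarrow> nat \<Rightarrow> int" where
  "dd ns i = int i * ns ! 0 - 2 * (\<Sum>j = 2..i. ns ! (j - 1))"

definition ccn :: "int list \<Rightarrow> nat \<Rightarrow> nat \<Rightarrow> nat \<Rightarrow> int" where
  "ccn ns i j k = dd ns i + dd ns j - dd ns k"   (* = 2 c_ijk *)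

definition cc :: "int list \<Rightarrow> nat \<Rightarrow> nat \<Rightarrow> nat \<Rightarrow> nat" where
  "cc ns i j k = nat (ccn ns i j k div 2)"

text \<open>(.,.)_{c_ijk} : V_{d_i} x V_{d_j} -> V_{d_k} is defined iff c_ijk is an integer
  with 0 <= c_ijk <= min(d_i, d_j).\<close>
definition tv_defined :: "int list \<Rightarrow> nat \<Rightarrow> nat \<Rightarrow> nat \<Rightarrow> bool" where
  "tv_defined ns i j k \<longleftrightarrow> even (ccn ns i j k) \<and> 0 \<le> ccn ns i j k
      \<and> ccn ns i j k div 2 \<le> min (dd ns i) (dd ns j)"

definition tv_skew :: "'a::field_char_0 itself \<Rightarrow> int list \<Rightarrow> nat \<Rightarrow> nat \<Rightarrow> bool" where
  "tv_skew _ ns i k \<longleftrightarrow>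
     (\<forall>f \<in> (Vd (nat (dd ns i)) :: 'a poly poly set). \<forall>g \<in> Vd (nat (dd ns i)).
        transv (nat (dd ns i)) (nat (dd ns i)) (cc ns i i k) f g
        = - transv (nat (dd ns i)) (nat (dd ns i)) (cc ns i i k) g f)"

text \<open>Elements of g = sl2 + m_1 + ... + m_t as pairs (s, u) with u i in m_i = V_{d_i}.\<close>
type_synonym 'a gelem = "('a \<times> 'a \<times> 'a) \<times> (nat \<Rightarrow> 'a poly poly)"

definition gcarrier :: "int list \<Rightarrow> 'a::zero gelem set" where
  "gcarrier ns = {(s, u). (\<forall>i. 1 \<le> i \<and> i \<le> length ns \<longrightarrow> u i \<in> Vd (nat (dd ns i)))
                        \<and> (\<forall>i. \<not> (1 \<le> i \<and> i \<le> length ns) \<longrightarrow> u i = 0)}"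

definition gadd :: "'a::idom gelem \<Rightarrow> 'a gelem \<Rightarrow> 'a gelem" where
  "gadd x y = (case x of ((a1, b1, c1), u1) \<Rightarrow> case y of ((a2, b2, c2), u2) \<Rightarrow>
      ((a1 + a2, b1 + b2, c1 + c2), \<lambda>i. u1 i + u2 i))"

definition gscale :: "'a::idom \<Rightarrow> 'a gelem \<Rightarrow> 'a gelem" where
  "gscale r x = (case x of ((a, b, c), u) \<Rightarrow> ((r * a, r * b, r * c), \<lambda>i. pC r * u i))"

definition gzero :: "'a::idom gelem" where
  "gzero = ((0, 0, 0), \<lambda>i. 0)"

definition gbr :: "int list \<Rightarrow> (nat \<Rightarrow> nat \<Rightarrow> nat \<Rightarrow> 'a::field_char_0) \<Rightarrow> 'a gelem \<Rightarrow> 'a gelem \<Rightarrow> 'a gelem" where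
  "gbr ns \<alpha> x y = (case x of (s1, u1) \<Rightarrow> case y of (s2, u2) \<Rightarrow>
     (sl2_br s1 s2,
      \<lambda>k. if 1 \<le> k \<and> k \<le> length ns then
             sl2_act s1 (u2 k) - sl2_act s2 (u1 k)
             + (\<Sum>i = 1..length ns. \<Sum>j = i..length ns.
                  if i + j \<le> k then
                    pC (\<alpha> i j k) *
                      (transv (nat (dd ns i)) (nat (dd ns j)) (cc ns i j k) (u1 i) (u2 j)
                       - (if i < j then transv (nat (dd ns i)) (nat (dd ns j)) (cc ns i j k) (u2 i) (u1 j)
                          else 0))
                  else 0)
           else 0))"

definition is_lie_algebra ::
  "'g set \<Rightarrow> ('g \<Rightarrow> 'g \<Rightarrow> 'g) \<Rightarrow> ('k \<Rightarrow> 'g \<Rightarrow> 'g) \<Rightarrow> 'g \<Rightarrow> ('g \<Rightarrow> 'g \<Rightarrow> 'g) \<Rightarrow> bool" where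
  "is_lie_algebra C add sc z br \<longleftrightarrow>
     (\<forall>x\<in>C. \<forall>y\<in>C. br x y \<in> C)
     \<and> (\<forall>r. \<forall>x\<in>C. \<forall>y\<in>C. \<forall>w\<in>C. br (add (sc r x) y) w = add (sc r (br x w)) (br y w))
     \<and> (\<forall>r. \<forall>x\<in>C. \<forall>y\<in>C. \<forall>w\<in>C. br w (add (sc r x) y) = add (sc r (br w x)) (br w y))
     \<and> (\<forall>x\<in>C. br x x = z)
     \<and> (\<forall>x\<in>C. \<forall>y\<in>C. \<forall>w\<in>C. add (add (br x (br y w)) (br y (br w x))) (br w (br x y)) = z)"

definition is_ideal ::
  "'g set \<Rightarrow> ('g \<Rightarrow> 'g \<Rightarrow> 'g) \<Rightarrow> ('k \<Rightarrow> 'g \<Rightarrow> 'g) \<Rightarrow> 'g \<Rightarrow> ('g \<Rightarrow> 'g \<Rightarrow> 'g) \<Rightarrow> 'g set \<Rightarrow> bool" where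
  "is_ideal C add sc z br I \<longleftrightarrow>
     I \<subseteq> C \<and> z \<in> I \<and> (\<forall>x\<in>I. \<forall>y\<in>I. add x y \<in> I) \<and> (\<forall>r. \<forall>x\<in>I. sc r x \<in> I)
     \<and> (\<forall>x\<in>C. \<forall>y\<in>I. br x y \<in> I)"

text \<open>m_r + ... + m_t (r = t+1 gives 0).\<close>
definition tail_ideal :: "int list \<Rightarrow> nat \<Rightarrow> 'a::idom gelem set" where
  "tail_ideal ns r = {(s, u) \<in> gcarrier ns. s = (0, 0, 0) \<and> (\<forall>i < r. u i = 0)}"

definition sl2_chained :: "'a::field_char_0 itself \<Rightarrow> int list \<Rightarrow> bool" where
  "sl2_chained T ns \<longleftrightarrow>
     (\<forall>i. 1 \<le> i \<and> i \<le> length ns \<longrightarrow> 0 \<le> dd ns i)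
     \<and> (\<exists>\<alpha> :: nat \<Rightarrow> nat \<Rightarrow> nat \<Rightarrow> 'a.
          (\<forall>j. 1 \<le> j \<and> j \<le> length ns - 1 \<longrightarrow> \<alpha> 1 j (j + 1) \<noteq> 0)
        \<and> (\<forall>i j k. 1 \<le> i \<and> i \<le> j \<and> i + j \<le> k \<and> k \<le> length ns
             \<and> (\<not> tv_defined ns i j k \<or> (i = j \<and> \<not> tv_skew T ns i k)) \<longrightarrow> \<alpha> i j k = 0)
        \<and> is_lie_algebra (gcarrier ns :: 'a gelem set) gadd gscale gzero (gbr ns \<alpha>)
        \<and> {I. is_ideal (gcarrier ns) gadd gscale gzero (gbr ns \<alpha>) I}
            = insert (gcarrier ns) (tail_ideal ns ` {1..length ns + 1}))"

end

theory Submission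
  imports Defs
begin

text \<open>Cutting an element of \<open>sl\<^sub>2 + m\<^sub>1 + ... + m\<^sub>t\<close> down to its components in
  \<open>sl\<^sub>2 + m\<^sub>1 + ... + m\<^sub>k\<close> is a homomorphism onto the algebra of \<open>(n\<^sub>1, ..., n\<^sub>k)\<close> with the
  same scalars \<open>\<alpha>\<close>: the bracket of \<open>m\<^sub>i\<close> and \<open>m\<^sub>j\<close> only has components in \<open>m\<^sub>l\<close> with
  \<open>l \<ge> i + j\<close>, and \<open>d\<^sub>i\<close>, \<open>c\<^sub>i\<^sub>j\<^sub>l\<close> for indices up to \<open>k\<close> only depend on \<open>n\<^sub>1, ..., n\<^sub>k\<close>.
  As the target is a subspace on which the truncation is the identity, the Lie algebra axioms
  pass to it, and its ideals are the images of the ideals containing the kernel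
  \<open>m\<^sub>k\<^sub>+\<^sub>1 + ... + m\<^sub>t\<close>: the whole algebra and the \<open>m\<^sub>r + ... + m\<^sub>t\<close> with \<open>r \<le> k + 1\<close>.\<close>

locale bracket_retraction =
  fixes C C' :: "'g set" and add :: "'g \<Rightarrow> 'g \<Rightarrow> 'g" and sc :: "'k \<Rightarrow> 'g \<Rightarrow> 'g"
    and z :: 'g and br br' :: "'g \<Rightarrow> 'g \<Rightarrow> 'g" and h :: "'g \<Rightarrow> 'g"
  assumes h_maps_to: "x \<in> C \<Longrightarrow> h x \<in> C'"
    and subset: "C' \<subseteq> C"
    and h_fixed: "x \<in> C' \<Longrightarrow> h x = x"
    and h_add: "h (add x y) = add (h x) (h y)"
    and h_sc: "h (sc r x) = sc r (h x)"
    and h_zero: "h z = z"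
    and h_br: "h (br x y) = br' (h x) (h y)"
begin

lemma image_carrier: "h ` C = C'"
  using h_maps_to subset h_fixed by (force simp: image_iff)

lemma image_preimage: "I \<subseteq> C' \<Longrightarrow> h ` {x \<in> C. h x \<in> I} = I"
  using h_maps_to subset h_fixed by (force simp: image_iff)

lemma is_lie_algebra_image:
  assumes lie: "is_lie_algebra C add sc z br"
  shows "is_lie_algebra C' add sc z br'"
  unfolding is_lie_algebra_def
proof (intro conjI ballI allI)
  fix x y assume C': "x \<in> C'" "y \<in> C'"
  then have "br x y \<in> C"
    using lie subset unfolding is_lie_algebra_def by blast
  with C' show "br' x y \<in> C'" by (metis h_br h_fixed h_maps_to)
next
  fix r x y w assume C': "x \<in> C'" "y \<in> C'" "w \<in> C'"
  then have "br' (add (sc r x) y) w = h (br (add (sc r x) y) w)"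
    by (simp add: h_br h_add h_sc h_fixed)
  also have "\<dots> = h (add (sc r (br x w)) (br y w))"
    using lie C' subset unfolding is_lie_algebra_def by (metis subsetD)
  also have "\<dots> = add (sc r (br' x w)) (br' y w)"
    using C' by (simp add: h_br h_add h_sc h_fixed)
  finally show "br' (add (sc r x) y) w = add (sc r (br' x w)) (br' y w)" .
next
  fix r x y w assume C': "x \<in> C'" "y \<in> C'" "w \<in> C'"
  then have "br' w (add (sc r x) y) = h (br w (add (sc r x) y))"
    by (simp add: h_br h_add h_sc h_fixed)
  also have "\<dots> = h (add (sc r (br w x)) (br w y))"
    using lie C' subset unfolding is_lie_algebra_def by (metis subsetD)
  also have "\<dots> = add (sc r (br' w x)) (br' w y)"
    using C' by (simp add: h_br h_add h_sc h_fixed)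
  finally show "br' w (add (sc r x) y) = add (sc r (br' w x)) (br' w y)" .
next
  fix x assume C': "x \<in> C'"
  then have "br' x x = h (br x x)" by (simp add: h_br h_fixed)
  also have "\<dots> = z"
    using lie C' subset h_zero unfolding is_lie_algebra_def by (metis subsetD)
  finally show "br' x x = z" .
next
  fix x y w assume C': "x \<in> C'" "y \<in> C'" "w \<in> C'"
  then have "add (add (br' x (br' y w)) (br' y (br' w x))) (br' w (br' x y))
      = h (add (add (br x (br y w)) (br y (br w x))) (br w (br x y)))"
    by (simp add: h_br h_add h_fixed)
  also have "\<dots> = z"
    using lie C' subset h_zero unfolding is_lie_algebra_def by (metis subsetD)
  finally show "add (add (br' x (br' y w)) (br' y (br' w x))) (br' w (br' x y)) = z" .
qed

lemma is_ideal_image: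
  assumes J: "is_ideal C add sc z br J"
  shows "is_ideal C' add sc z br' (h ` J)"
  unfolding is_ideal_def
proof (intro conjI ballI allI)
  show "h ` J \<subseteq> C'" "z \<in> h ` J"
    using J h_maps_to h_zero by (force simp: is_ideal_def)+
next
  fix x y assume "x \<in> h ` J" "y \<in> h ` J"
  then show "add x y \<in> h ` J"
    using J by (auto simp: is_ideal_def h_add[symmetric])
next
  fix r x assume "x \<in> h ` J"
  then show "sc r x \<in> h ` J"
    using J by (auto simp: is_ideal_def h_sc[symmetric])
next
  fix x y assume "x \<in> C'" "y \<in> h ` J"
  then show "br' x y \<in> h ` J"
    using J subset h_fixed by (auto simp: is_ideal_def) (metis h_br image_eqI subsetD)
qed

lemma is_ideal_preimage:
  assumes C: "is_ideal C add sc z br C" and I: "is_ideal C' add sc z br' I"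
  shows "is_ideal C add sc z br {x \<in> C. h x \<in> I}"
  using C I h_maps_to by (auto simp: is_ideal_def h_add h_sc h_zero h_br)

lemma ideals_image:
  assumes "is_ideal C add sc z br C"
  shows "{I. is_ideal C' add sc z br' I}
    = (\<lambda>J. h ` J) ` {J. is_ideal C add sc z br J \<and> {x \<in> C. h x = z} \<subseteq> J}"
proof (intro antisym subsetI)
  fix I assume "I \<in> {I. is_ideal C' add sc z br' I}"
  then have I: "is_ideal C' add sc z br' I" by simp
  then have "I = h ` {x \<in> C. h x \<in> I}" "z \<in> I"
    using image_preimage by (auto simp: is_ideal_def)
  with I is_ideal_preimage[OF assms I] show "I \<in> (\<lambda>J. h ` J) ` {J. is_ideal C add sc z br J \<and> {x \<in> C. h x = z} \<subseteq> J}"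
    by blast
qed (auto intro: is_ideal_image)

end

lemma dd_take: "i \<le> k \<Longrightarrow> dd (take k ns) i = dd ns i"
  unfolding dd_def by (cases "i = 0") (auto intro!: sum.cong)

lemma ccn_take: "i \<le> k \<Longrightarrow> j \<le> k \<Longrightarrow> l \<le> k \<Longrightarrow> ccn (take k ns) i j l = ccn ns i j l"
  by (simp add: ccn_def dd_take)

lemma cc_take: "i \<le> k \<Longrightarrow> j \<le> k \<Longrightarrow> l \<le> k \<Longrightarrow> cc (take k ns) i j l = cc ns i j l"
  by (simp add: cc_def ccn_take)

lemma tv_defined_take:
  "i \<le> k \<Longrightarrow> j \<le> k \<Longrightarrow> l \<le> k \<Longrightarrow> tv_defined (take k ns) i j l = tv_defined ns i j l"
  by (simp add: tv_defined_def ccn_take dd_take)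

lemma tv_skew_take: "i \<le> k \<Longrightarrow> l \<le> k \<Longrightarrow> tv_skew T (take k ns) i l = tv_skew T ns i l"
  by (simp add: tv_skew_def cc_take dd_take)

definition gtruncate :: "nat \<Rightarrow> 'a::zero gelem \<Rightarrow> 'a gelem" where
  "gtruncate k x = (fst x, \<lambda>i. if i \<le> k then snd x i else 0)"

lemma gtruncate_gadd: "gtruncate k (gadd x y) = gadd (gtruncate k x) (gtruncate k y)"
  by (auto simp: gtruncate_def gadd_def fun_eq_iff split: prod.split)

lemma gtruncate_gscale: "gtruncate k (gscale r x) = gscale r (gtruncate k x)"
  by (auto simp: gtruncate_def gscale_def fun_eq_iff split: prod.split)

lemma gtruncate_gzero: "gtruncate k gzero = gzero"
  by (simp add: gtruncate_def gzero_def fun_eq_iff)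

lemma gtruncate_in_gcarrier_take:
  "k \<le> length ns \<Longrightarrow> x \<in> gcarrier ns \<Longrightarrow> gtruncate k x \<in> gcarrier (take k ns)"
  by (auto simp: gtruncate_def gcarrier_def dd_take)

lemma gcarrier_take_subset: "gcarrier (take k ns) \<subseteq> gcarrier ns"
  by (clarsimp simp: gcarrier_def dd_take Vd_def homog_def) (metis coeff_0 linorder_not_le)

lemma gtruncate_gcarrier_take: "x \<in> gcarrier (take k ns) \<Longrightarrow> gtruncate k x = x"
  by (auto simp: gtruncate_def gcarrier_def fun_eq_iff)

lemma sum_triangle_shrink:
  fixes g :: "nat \<Rightarrow> nat \<Rightarrow> 'b::comm_monoid_add"
  assumes "m \<le> n" "\<And>i j. m < j \<Longrightarrow> g i j = 0"
  shows "(\<Sum>i = 1..n. \<Sum>j = i..n. g i j) = (\<Sum>i = 1..m. \<Sum>j = i..m. g i j)"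
proof -
  have "(\<Sum>i = 1..n. \<Sum>j = i..n. g i j) = (\<Sum>i = 1..n. \<Sum>j = i..m. g i j)"
    by (intro sum.cong refl sum.mono_neutral_right) (use assms in auto)
  also have "\<dots> = (\<Sum>i = 1..m. \<Sum>j = i..m. g i j)"
    by (rule sum.mono_neutral_right) (use assms in auto)
  finally show ?thesis .
qed

definition gbr_transv_sum ::
  "int list \<Rightarrow> (nat \<Rightarrow> nat \<Rightarrow> nat \<Rightarrow> 'a::field_char_0) \<Rightarrow> (nat \<Rightarrow> 'a poly poly) \<Rightarrow> (nat \<Rightarrow> 'a poly poly)
     \<Rightarrow> nat \<Rightarrow> 'a poly poly" where
  "gbr_transv_sum ns \<alpha> u1 u2 k =
     (\<Sum>i = 1..length ns. \<Sum>j = i..length ns.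
        if i + j \<le> k then
          pC (\<alpha> i j k) *
            (transv (nat (dd ns i)) (nat (dd ns j)) (cc ns i j k) (u1 i) (u2 j)
             - (if i < j then transv (nat (dd ns i)) (nat (dd ns j)) (cc ns i j k) (u2 i) (u1 j)
                else 0))
        else 0)"

lemma gbr_eq:
  "gbr ns \<alpha> (s1, u1) (s2, u2) =
     (sl2_br s1 s2, \<lambda>k. if 1 \<le> k \<and> k \<le> length ns
        then sl2_act s1 (u2 k) - sl2_act s2 (u1 k) + gbr_transv_sum ns \<alpha> u1 u2 k else 0)"
  unfolding gbr_def gbr_transv_sum_def by simp

text \<open>Only pairs with \<open>i + j \<le> l \<le> k\<close> contribute to the sum.\<close>

lemma gbr_transv_sum_take:
  assumes "l \<le> k" "k \<le> length ns"
  shows "gbr_transv_sum (take k ns) \<alpha> (\<lambda>i. if i \<le> k then u1 i else 0) (\<lambda>i. if i \<le> k then u2 i else 0) l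
    = gbr_transv_sum ns \<alpha> u1 u2 l"
  unfolding gbr_transv_sum_def
  by (subst sum_triangle_shrink[OF assms(2)])
    (use assms in \<open>auto simp: min_absorb1 dd_take cc_take intro!: sum.cong\<close>)

lemma gtruncate_gbr:
  assumes "k \<le> length ns"
  shows "gtruncate k (gbr ns \<alpha> x y) = gbr (take k ns) \<alpha> (gtruncate k x) (gtruncate k y)"
proof -
  obtain s1 u1 s2 u2 where "x = (s1, u1)" "y = (s2, u2)" by fastforce
  then show ?thesis
    using assms by (auto simp: gtruncate_def gbr_eq fun_eq_iff min_absorb1 gbr_transv_sum_take)
qed

lemma bracket_retraction_gtruncate:
  "k \<le> length ns \<Longrightarrow> bracket_retraction (gcarrier ns) (gcarrier (take k ns)) gadd gscale gzero
     (gbr ns \<alpha>) (gbr (take k ns) \<alpha>) (gtruncate k)"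
  by unfold_locales (simp_all add: gtruncate_in_gcarrier_take gcarrier_take_subset
      gtruncate_gcarrier_take gtruncate_gadd gtruncate_gscale gtruncate_gzero gtruncate_gbr)

lemma gtruncate_tail_ideal:
  assumes "k \<le> length ns"
  shows "gtruncate k ` tail_ideal ns r = tail_ideal (take k ns) r"
proof (intro antisym subsetI)
  fix x assume "x \<in> gtruncate k ` tail_ideal ns r"
  then show "x \<in> tail_ideal (take k ns) r"
    using assms gtruncate_in_gcarrier_take by (fastforce simp: tail_ideal_def gtruncate_def)
next
  fix x assume x: "x \<in> tail_ideal (take k ns) r"
  then have "x \<in> gcarrier (take k ns)"
    unfolding tail_ideal_def by blast
  then have "x = gtruncate k x"
    by (simp add: gtruncate_gcarrier_take)
  moreover have "x \<in> tail_ideal ns r"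
    using x gcarrier_take_subset unfolding tail_ideal_def by blast
  ultimately show "x \<in> gtruncate k ` tail_ideal ns r" by blast
qed

lemma gtruncate_kernel_subset_tail_ideal_iff:
  assumes "k \<le> length ns" "r \<le> length ns + 1"
  shows "{x \<in> gcarrier ns. gtruncate k x = (gzero :: 'a::idom gelem)} \<subseteq> tail_ideal ns r \<longleftrightarrow> r \<le> k + 1"
proof
  assume "r \<le> k + 1"
  then show "{x \<in> gcarrier ns. gtruncate k x = (gzero :: 'a gelem)} \<subseteq> tail_ideal ns r"
    by (auto simp: tail_ideal_def gtruncate_def gzero_def fun_eq_iff)
next
  assume kernel: "{x \<in> gcarrier ns. gtruncate k x = (gzero :: 'a gelem)} \<subseteq> tail_ideal ns r"
  show "r \<le> k + 1"
  proof (rule ccontr)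
    assume "\<not> r \<le> k + 1"
    define e :: "'a gelem"
      where "e = ((0, 0, 0), \<lambda>i. if i = k + 1 then monom 1 (nat (dd ns (k + 1))) else 0)"
    have "e \<in> gcarrier ns" "gtruncate k e = gzero"
      using \<open>\<not> r \<le> k + 1\<close> assms
      by (auto simp: e_def gcarrier_def Vd_def homog_def coeff_monom gtruncate_def gzero_def fun_eq_iff)
    with kernel have "e \<in> tail_ideal ns r" by blast
    with \<open>\<not> r \<le> k + 1\<close> have "snd e (k + 1) = 0" unfolding tail_ideal_def by auto
    then show False by (simp add: e_def)
  qed
qed

lemma tail_ideals_containing_gtruncate_kernel:
  assumes "k \<le> length ns"
  shows "{J \<in> insert (gcarrier ns) (tail_ideal ns ` {1..length ns + 1}).
            {x \<in> gcarrier ns. gtruncate k x = (gzero :: 'a::idom gelem)} \<subseteq> J}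
    = insert (gcarrier ns) (tail_ideal ns ` {1..k + 1})"
proof -
  let ?K = "{x \<in> gcarrier ns. gtruncate k x = (gzero :: 'a gelem)}"
  have "{r \<in> {1..length ns + 1}. ?K \<subseteq> tail_ideal ns r} = {r \<in> {1..length ns + 1}. r \<le> k + 1}"
    using gtruncate_kernel_subset_tail_ideal_iff[OF assms] by auto
  also have "\<dots> = {1..k + 1}"
    using assms by auto
  finally show ?thesis by blast
qed

lemma is_lie_algebra_gbr_take:
  assumes "k \<le> length ns" and "is_lie_algebra (gcarrier ns) gadd gscale gzero (gbr ns \<alpha>)"
  shows "is_lie_algebra (gcarrier (take k ns)) gadd gscale gzero (gbr (take k ns) \<alpha>)"
  using bracket_retraction.is_lie_algebra_image[OF bracket_retraction_gtruncate] assms .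

lemma ideals_gbr_take:
  fixes \<alpha> :: "nat \<Rightarrow> nat \<Rightarrow> nat \<Rightarrow> 'a::field_char_0"
  assumes k: "k \<le> length ns"
    and ideals: "{I. is_ideal (gcarrier ns) gadd gscale gzero (gbr ns \<alpha>) I}
      = insert (gcarrier ns) (tail_ideal ns ` {1..length ns + 1})"
  shows "{I. is_ideal (gcarrier (take k ns)) gadd gscale gzero (gbr (take k ns) \<alpha>) I}
      = insert (gcarrier (take k ns)) (tail_ideal (take k ns) ` {1..length (take k ns) + 1})"
proof -
  let ?C = "gcarrier ns :: 'a gelem set" and ?C' = "gcarrier (take k ns) :: 'a gelem set"
  interpret bracket_retraction ?C ?C' gadd gscale gzero "gbr ns \<alpha>" "gbr (take k ns) \<alpha>" "gtruncate k"
    using k by (rule bracket_retraction_gtruncate)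
  have is_ideal_iff: "is_ideal ?C gadd gscale gzero (gbr ns \<alpha>) J \<longleftrightarrow>
      J \<in> insert ?C (tail_ideal ns ` {1..length ns + 1})" for J
    using ideals by blast
  have "{I. is_ideal ?C' gadd gscale gzero (gbr (take k ns) \<alpha>) I}
      = (\<lambda>J. gtruncate k ` J) ` {J. is_ideal ?C gadd gscale gzero (gbr ns \<alpha>) J
          \<and> {x \<in> ?C. gtruncate k x = gzero} \<subseteq> J}"
    using is_ideal_iff by (intro ideals_image) simp
  also have "\<dots> = (\<lambda>J. gtruncate k ` J) ` insert ?C (tail_ideal ns ` {1..k + 1})"
    by (simp only: is_ideal_iff tail_ideals_containing_gtruncate_kernel[OF k])
  also have "\<dots> = insert ?C' (tail_ideal (take k ns) ` {1..length (take k ns) + 1})"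
    using k by (simp add: image_carrier image_image gtruncate_tail_ideal min_absorb1)
  finally show ?thesis .
qed

theorem lemma4p8:
  fixes ns :: "int list" and k :: nat
  assumes "sl2_chained TYPE('a::field_char_0) ns"
    and "1 \<le> k" and "k \<le> length ns"
  shows "sl2_chained TYPE('a) (take k ns)"
proof -
  obtain \<alpha> :: "nat \<Rightarrow> nat \<Rightarrow> nat \<Rightarrow> 'a" where
    dd_nonneg: "\<forall>i. 1 \<le> i \<and> i \<le> length ns \<longrightarrow> 0 \<le> dd ns i" and
    chain: "\<forall>j. 1 \<le> j \<and> j \<le> length ns - 1 \<longrightarrow> \<alpha> 1 j (j + 1) \<noteq> 0" and
    vanish: "\<forall>i j l. 1 \<le> i \<and> i \<le> j \<and> i + j \<le> l \<and> l \<le> length ns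
       \<and> (\<not> tv_defined ns i j l \<or> (i = j \<and> \<not> tv_skew TYPE('a) ns i l)) \<longrightarrow> \<alpha> i j l = 0" and
    lie: "is_lie_algebra (gcarrier ns) gadd gscale gzero (gbr ns \<alpha>)" and
    ideals: "{I. is_ideal (gcarrier ns) gadd gscale gzero (gbr ns \<alpha>) I}
      = insert (gcarrier ns) (tail_ideal ns ` {1..length ns + 1})"
    using assms(1) unfolding sl2_chained_def by (elim conjE exE) (rule that; assumption)
  show ?thesis
    unfolding sl2_chained_def
    using dd_nonneg chain vanish assms(3)
      is_lie_algebra_gbr_take[OF assms(3) lie] ideals_gbr_take[OF assms(3) ideals]
    by (intro conjI exI[of _ \<alpha>]) (auto simp: min_absorb1 dd_take tv_defined_take tv_skew_take)
qed

end
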